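(* Let $(\mathcal A,\gamma,\phi)$ be a $\mathbb Z_2$-graded noncommutative probability space and let $\mathcal U$ be the infinite graded tensor product of copies of $(\mathcal A,\gamma,\phi)$, with product functional $\tilde\phi$ and with $X^{(k)}$ denoting the image of $X\in\mathcal A$ in the $k$-th tensor factor $\mathcal A_k$. Then the algebras $(\mathcal A_k)_{k\in\mathbb N}$ are interchangeable: for all $X_1,\dots,X_n\in\mathcal A$, all indices $i_1,\dots,i_n\in\mathbb N$ and every bijection $\sigma$ of $\mathbb N$, $\tilde\phi(X_1^{(i_1)}\cdots X_n^{(i_n)})=\tilde\phi(X_1^{(\sigma(i_1))}\cdots X_n^{(\sigma(i_n))})$.
   Context: A $\mathbb Z_2$-graded noncommutative probability space $(\mathcal A,\gamma,\phi)$ consists of a complex unital algebra $\mathcal A=\mathcal A_+\oplus\mathcal A_-$ graded by an algebra automorphism $\gamma$ of order 2 ($\mathcal A_\pm=\{X:\gamma(X)=\pm X\}$) and a unital linear functional $\phi$ with $\phi\circ\gamma=\phi$. Homogeneous elements have degree $\partial X=0$ for $X\in\mathcal A_+$, $\partial X=1$ for $X\in\mathcal A_-$. The graded tensor product $\mathcal A_1\otimes_2\mathcal A_2$ of graded algebras is the vector space tensor product with multiplication $(X_1\otimes X_2)(X_1'\otimes X_2')=(-1)^{\partial X_2\,\partial X_1'}X_1X_1'\otimes X_2X_2'$ for homogeneous elements, extended bilinearly, grading $\gamma_1\otimes\gamma_2$, and functional $\phi_1\otimes\phi_2$; it is associative. The infinite graded tensor product is the union (inductive limit) of the finite graded tensor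 products $\mathcal A^{\otimes_2 N}$ under $x\mapsto x\otimes1$, with $\tilde\phi$ the product functional, and $X^{(k)}=1\otimes\cdots\otimes1\otimes X\otimes1\otimes\cdots$ ($X$ in position $k$). *)

theory Defs
  imports Complex_Main
begin

definition cplx_algebra :: "(complex \<Rightarrow> 'a::ring_1 \<Rightarrow> 'a) \<Rightarrow> bool" where
  "cplx_algebra sc \<longleftrightarrow> module sc \<and>
     (\<forall>c x y. sc c (x * y) = sc c x * y \<and> sc c (x * y) = x * sc c y)"

definition alg_hom :: "(complex \<Rightarrow> 'a::ring_1 \<Rightarrow> 'a) \<Rightarrow> (complex \<Rightarrow> 'b::ring_1 \<Rightarrow> 'b)
    \<Rightarrow> ('a \<Rightarrow> 'b) \<Rightarrow> bool" where
  "alg_hom sa sb f \<longleftrightarrow> Vector_Spaces.linear sa sb f \<and> f 1 = 1 \<and> (\<forall>x y. f (x * y) = f x * f y)"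

definition grading :: "(complex \<Rightarrow> 'a::ring_1 \<Rightarrow> 'a) \<Rightarrow> ('a \<Rightarrow> 'a) \<Rightarrow> bool" where
  "grading sa \<gamma> \<longleftrightarrow> alg_hom sa sa \<gamma> \<and> (\<forall>x. \<gamma> (\<gamma> x) = x)"

definition even_elt :: "('a \<Rightarrow> 'a) \<Rightarrow> 'a \<Rightarrow> bool" where
  "even_elt \<gamma> x \<longleftrightarrow> \<gamma> x = x"

definition odd_elt :: "('a \<Rightarrow> 'a::ab_group_add) \<Rightarrow> 'a \<Rightarrow> bool" where
  "odd_elt \<gamma> x \<longleftrightarrow> \<gamma> x = - x"

definition graded_ncps :: "(complex \<Rightarrow> 'a::ring_1 \<Rightarrow> 'a) \<Rightarrow> ('a \<Rightarrow> 'a) \<Rightarrow> ('a \<Rightarrow> complex) \<Rightarrow> bool" where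
  "graded_ncps sa \<gamma> \<phi> \<longleftrightarrow> cplx_algebra sa \<and> grading sa \<gamma> \<and>
     Vector_Spaces.linear sa (*) \<phi> \<and> \<phi> 1 = 1 \<and> (\<forall>x. \<phi> (\<gamma> x) = \<phi> x)"

text \<open>Ordered product  X_0^{(0)} X_1^{(1)} ... X_{N-1}^{(N-1)}  which equals the elementary
  tensor X_0 \<otimes> ... \<otimes> X_{N-1} \<otimes> 1 \<otimes> ... in the graded tensor product.\<close>
definition ordered_prod :: "(nat \<Rightarrow> 'a \<Rightarrow> 'u::monoid_mult) \<Rightarrow> nat \<Rightarrow> (nat \<Rightarrow> 'a) \<Rightarrow> 'u" where
  "ordered_prod \<iota> N x = prod_list (map (\<lambda>k. \<iota> k (x k)) [0..<N])"

text \<open>(U, gammaU, psi, iota) is (a model of) the infinite graded tensor product of copies of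
  (A, gamma, phi): iota k X = X^{(k)} embeds A as the k-th factor, elementary tensors span U,
  factors in different positions graded-commute, the grading is the product grading and the
  functional is the product functional on elementary tensors.\<close>
definition inf_graded_tensor_product ::
  "(complex \<Rightarrow> 'a::ring_1 \<Rightarrow> 'a) \<Rightarrow> ('a \<Rightarrow> 'a) \<Rightarrow> ('a \<Rightarrow> complex) \<Rightarrow>
   (complex \<Rightarrow> 'u::ring_1 \<Rightarrow> 'u) \<Rightarrow> ('u \<Rightarrow> 'u) \<Rightarrow> ('u \<Rightarrow> complex) \<Rightarrow> (nat \<Rightarrow> 'a \<Rightarrow> 'u) \<Rightarrow> bool" where
  "inf_graded_tensor_product sa \<gamma> \<phi> su \<gamma>u \<psi> \<iota> \<longleftrightarrow>
     cplx_algebra su \<and> grading su \<gamma>u \<and>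
     Vector_Spaces.linear su (*) \<psi> \<and> \<psi> 1 = 1 \<and> (\<forall>u. \<psi> (\<gamma>u u) = \<psi> u) \<and>
     (\<forall>k. alg_hom sa su (\<iota> k)) \<and>
     (\<forall>k x. \<gamma>u (\<iota> k x) = \<iota> k (\<gamma> x)) \<and>
     (\<forall>j k x y. j \<noteq> k \<longrightarrow> (even_elt \<gamma> x \<or> even_elt \<gamma> y) \<longrightarrow> \<iota> j x * \<iota> k y = \<iota> k y * \<iota> j x) \<and>
     (\<forall>j k x y. j \<noteq> k \<longrightarrow> odd_elt \<gamma> x \<longrightarrow> odd_elt \<gamma> y \<longrightarrow> \<iota> j x * \<iota> k y = - (\<iota> k y * \<iota> j x)) \<and>
     (\<forall>N x. \<psi> (ordered_prod \<iota> N x) = (\<Prod>k<N. \<phi> (x k))) \<and>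
     (\<forall>u. \<exists>N. u \<in> module.span su {ordered_prod \<iota> N x | x. True})"

end

theory Submission
  imports Defs "HOL-Library.Multiset"
begin

text \<open>Splitting every \<open>X\<^sub>j\<close> into its even and odd part, multiadditivity reduces the claim
  to homogeneous \<open>X\<^sub>j\<close>. A product of homogeneous factors \<open>\<iota>\<^sub>k(x)\<close> is brought into a normal
  form with pairwise distinct positions by two moves: commuting neighbours in different
  positions, at the cost of a sign \<open>\<plusminus>1\<close>, and multiplying neighbours in the same position.
  These moves depend only on the positions and degrees of the factors, and an injective
  relabelling \<open>\<sigma>\<close> of the positions preserves graded commutation, so the same moves with the
  same sign normalise the relabelled product. On a product with distinct positions the
  functional is the product of the \<open>\<phi>\<close>-values of the factors in any order: sorting the
  factors costs a sign \<open>-1\<close> only if some factor is odd, and then its \<open>\<phi>\<close>-value vanishes.\<close>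

text \<open>A letter \<open>c\<close> stands for the factor \<open>\<iota> (pos c) (elt c)\<close> of a product. Its degree is
  recorded explicitly because \<open>0\<close> is both even and odd.\<close>

datatype 'a letter = Letter (pos: nat) (elt: 'a) (odd_deg: bool)

definition word_prod :: "(nat \<Rightarrow> 'a \<Rightarrow> 'u::monoid_mult) \<Rightarrow> 'a letter list \<Rightarrow> 'u" where
  "word_prod f w = (\<Prod>c\<leftarrow>w. f (pos c) (elt c))"

lemma word_prod_simps [simp]:
  "word_prod f [] = 1"
  "word_prod f (c # w) = f (pos c) (elt c) * word_prod f w"
  "word_prod f (v @ w) = word_prod f v * word_prod f w"
  by (simp_all add: word_prod_def)

definition homogeneous_letter :: "('a \<Rightarrow> 'a::ab_group_add) \<Rightarrow> 'a letter \<Rightarrow> bool" where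
  "homogeneous_letter \<gamma> c \<longleftrightarrow>
     (if odd_deg c then odd_elt \<gamma> (elt c) else even_elt \<gamma> (elt c))"

definition graded_commute :: "('a \<Rightarrow> 'a::ab_group_add) \<Rightarrow> (nat \<Rightarrow> 'a \<Rightarrow> 'u::ring_1) \<Rightarrow> bool" where
  "graded_commute \<gamma> f \<longleftrightarrow>
     (\<forall>j k x y. j \<noteq> k \<longrightarrow> (even_elt \<gamma> x \<or> even_elt \<gamma> y) \<longrightarrow> f j x * f k y = f k y * f j x) \<and>
     (\<forall>j k x y. j \<noteq> k \<longrightarrow> odd_elt \<gamma> x \<longrightarrow> odd_elt \<gamma> y \<longrightarrow> f j x * f k y = - (f k y * f j x))"

lemma graded_commute_relabel:
  assumes "graded_commute \<gamma> f" and "inj \<sigma>"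
  shows "graded_commute \<gamma> (\<lambda>k. f (\<sigma> k))"
proof -
  have "\<sigma> j \<noteq> \<sigma> k" if "j \<noteq> k" for j k
    using assms(2) that by (simp add: inj_eq)
  then show ?thesis
    using assms(1) unfolding graded_commute_def by blast
qed

lemma graded_commute_even:
  "graded_commute \<gamma> f \<Longrightarrow> j \<noteq> k \<Longrightarrow> even_elt \<gamma> x \<or> even_elt \<gamma> y \<Longrightarrow> f j x * f k y = f k y * f j x"
  unfolding graded_commute_def by blast

lemma graded_commute_odd:
  "graded_commute \<gamma> f \<Longrightarrow> j \<noteq> k \<Longrightarrow> odd_elt \<gamma> x \<Longrightarrow> odd_elt \<gamma> y \<Longrightarrow> f j x * f k y = - (f k y * f j x)"
  unfolding graded_commute_def by blast

definition letter_sign :: "'a letter \<Rightarrow> 'a letter \<Rightarrow> 'u::ring_1" where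
  "letter_sign a b = (if odd_deg a \<and> odd_deg b then -1 else 1)"

lemma graded_commute_letters:
  fixes f :: "nat \<Rightarrow> 'a::ab_group_add \<Rightarrow> 'u::ring_1"
  assumes "graded_commute \<gamma> f" and "pos a \<noteq> pos b"
    and "homogeneous_letter \<gamma> a" and "homogeneous_letter \<gamma> b"
  shows "f (pos a) (elt a) * f (pos b) (elt b) = letter_sign a b * (f (pos b) (elt b) * f (pos a) (elt a))"
proof (cases "odd_deg a \<and> odd_deg b")
  case True
  then have "odd_elt \<gamma> (elt a)" and "odd_elt \<gamma> (elt b)"
    using assms(3,4) by (simp_all add: homogeneous_letter_def)
  then have "f (pos a) (elt a) * f (pos b) (elt b) = - (f (pos b) (elt b) * f (pos a) (elt a))"
    by (rule graded_commute_odd[OF assms(1,2)])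
  moreover have "letter_sign a b = (-1 :: 'u)"
    by (simp only: letter_sign_def if_P[OF True])
  ultimately show ?thesis
    by simp
next
  case False
  then have "even_elt \<gamma> (elt a) \<or> even_elt \<gamma> (elt b)"
    using assms(3,4) by (auto simp: homogeneous_letter_def)
  then have "f (pos a) (elt a) * f (pos b) (elt b) = f (pos b) (elt b) * f (pos a) (elt a)"
    by (rule graded_commute_even[OF assms(1,2)])
  moreover have "letter_sign a b = (1 :: 'u)"
    by (simp only: letter_sign_def if_not_P[OF False])
  ultimately show ?thesis
    by simp
qed

text \<open>Reordering a word can produce the sign \<open>-1\<close> only by swapping two odd letters.\<close>

definition graded_sign :: "'a letter list \<Rightarrow> 'u::ring_1 \<Rightarrow> bool" where
  "graded_sign w s \<longleftrightarrow> s = 1 \<or> (s = -1 \<and> (\<exists>c\<in>set w. odd_deg c))"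

lemma graded_sign_one: "graded_sign w 1"
  by (simp add: graded_sign_def)

lemma graded_sign_mult: "graded_sign w s \<Longrightarrow> graded_sign w t \<Longrightarrow> graded_sign w (s * t)"
  by (auto simp: graded_sign_def)

lemma graded_sign_mono: "graded_sign v s \<Longrightarrow> set v \<subseteq> set w \<Longrightarrow> graded_sign w s"
  by (auto simp: graded_sign_def)

lemma graded_sign_letter_sign: "graded_sign (a # b # w) (letter_sign a b)"
  by (simp add: graded_sign_def letter_sign_def)

lemma graded_sign_left_commute: "graded_sign w s \<Longrightarrow> x * (s * y) = s * (x * y)"
  by (auto simp: graded_sign_def)

lemma word_prod_insort:
  assumes "homogeneous_letter \<gamma> a" and "\<forall>c\<in>set v. homogeneous_letter \<gamma> c"
  shows "\<exists>s::'u::ring_1. graded_sign (a # v) s \<and>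
    (\<forall>f. graded_commute \<gamma> f \<longrightarrow> word_prod f (a # v) = s * word_prod f (insort_key pos a v))"
  using assms(2)
proof (induction v)
  case Nil
  show ?case by (auto intro!: exI[of _ 1] graded_sign_one)
next
  case (Cons c v)
  show ?case
  proof (cases "pos a \<le> pos c")
    case True
    then show ?thesis by (auto intro!: exI[of _ 1] graded_sign_one)
  next
    case False
    have "\<forall>d\<in>set v. homogeneous_letter \<gamma> d"
      using Cons.prems by simp
    then obtain s :: 'u where s: "graded_sign (a # v) s"
      and IH: "\<forall>f. graded_commute \<gamma> f \<longrightarrow> word_prod f (a # v) = s * word_prod f (insort_key pos a v)"
      using Cons.IH by blast
    have "graded_sign (a # c # v) s"
      by (rule graded_sign_mono[OF s]) auto
    then have "graded_sign (a # c # v) (letter_sign a c * s)"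
      by (rule graded_sign_mult[OF graded_sign_letter_sign])
    moreover have "\<forall>f. graded_commute \<gamma> f \<longrightarrow>
      word_prod f (a # c # v) = letter_sign a c * s * word_prod f (insort_key pos a (c # v))"
    proof (intro allI impI)
      fix f :: "nat \<Rightarrow> 'a \<Rightarrow> 'u"
      assume f: "graded_commute \<gamma> f"
      have swap: "f (pos a) (elt a) * f (pos c) (elt c) = letter_sign a c * (f (pos c) (elt c) * f (pos a) (elt a))"
        using graded_commute_letters[OF f, of a c] False assms(1) Cons.prems by simp
      have "word_prod f (a # c # v) = f (pos a) (elt a) * f (pos c) (elt c) * word_prod f v"
        by (simp add: mult.assoc)
      also have "\<dots> = letter_sign a c * (f (pos c) (elt c) * word_prod f (a # v))"
        by (simp add: swap mult.assoc)
      also have "\<dots> = letter_sign a c * s * (f (pos c) (elt c) * word_prod f (insort_key pos a v))"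
        using IH f by (simp add: graded_sign_left_commute[OF s] mult.assoc)
      finally show "word_prod f (a # c # v) = letter_sign a c * s * word_prod f (insort_key pos a (c # v))"
        using False by simp
    qed
    ultimately show ?thesis
      by (intro exI[of _ "letter_sign a c * s"] conjI)
  qed
qed

lemma word_prod_sort:
  assumes "\<forall>c\<in>set w. homogeneous_letter \<gamma> c"
  shows "\<exists>s::'u::ring_1. graded_sign w s \<and>
    (\<forall>f. graded_commute \<gamma> f \<longrightarrow> word_prod f w = s * word_prod f (sort_key pos w))"
  using assms
proof (induction w)
  case Nil
  show ?case by (auto intro!: exI[of _ 1] graded_sign_one)
next
  case (Cons a w)
  then obtain s :: 'u where s: "graded_sign w s"
    and sort: "\<forall>f. graded_commute \<gamma> f \<longrightarrow> word_prod f w = s * word_prod f (sort_key pos w)"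
    by auto
  have hom_a: "homogeneous_letter \<gamma> a" and hom_sorted: "\<forall>c\<in>set (sort_key pos w). homogeneous_letter \<gamma> c"
    using Cons.prems by simp_all
  obtain t :: 'u where t: "graded_sign (a # sort_key pos w) t"
    and ins: "\<forall>f. graded_commute \<gamma> f \<longrightarrow>
      word_prod f (a # sort_key pos w) = t * word_prod f (sort_key pos (a # w))"
    using word_prod_insort[OF hom_a hom_sorted] by auto
  have "graded_sign (a # w) (s * t)"
    by (intro graded_sign_mult graded_sign_mono[OF s] graded_sign_mono[OF t]) auto
  moreover have "\<forall>f. graded_commute \<gamma> f \<longrightarrow>
    word_prod f (a # w) = s * t * word_prod f (sort_key pos (a # w))"
  proof (intro allI impI)
    fix f :: "nat \<Rightarrow> 'a \<Rightarrow> 'u"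
    assume f: "graded_commute \<gamma> f"
    have "word_prod f (a # w) = s * word_prod f (a # sort_key pos w)"
      using sort f by (simp add: graded_sign_left_commute[OF s])
    then show "word_prod f (a # w) = s * t * word_prod f (sort_key pos (a # w))"
      using ins f by (simp add: mult.assoc)
  qed
  ultimately show ?case
    by (intro exI[of _ "s * t"] conjI)
qed

definition merge_letters :: "'a::times letter \<Rightarrow> 'a letter \<Rightarrow> 'a letter" where
  "merge_letters a b = Letter (pos a) (elt a * elt b) (odd_deg a \<noteq> odd_deg b)"

lemma homogeneous_merge_letters:
  fixes \<gamma> :: "'a::ring_1 \<Rightarrow> 'a"
  assumes "\<And>x y. \<gamma> (x * y) = \<gamma> x * \<gamma> y"
    and "homogeneous_letter \<gamma> a" and "homogeneous_letter \<gamma> b"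
  shows "homogeneous_letter \<gamma> (merge_letters a b)"
  using assms
  by (auto simp: homogeneous_letter_def merge_letters_def even_elt_def odd_elt_def split: if_splits)

lemma word_prod_merge_letters:
  assumes "\<And>x y. f (pos a) (x * y) = f (pos a) x * f (pos a) y" and "pos a = pos b"
  shows "word_prod f (u @ a # b # r) = word_prod f (u @ merge_letters a b # r)"
  using assms by (simp add: merge_letters_def mult.assoc)

lemma sorted_not_distinct_adjacent:
  assumes "sorted (map f v)" and "\<not> distinct (map f v)"
  obtains u a b r where "v = u @ a # b # r" and "f a = f b"
proof -
  have "\<not> sorted_wrt (<) (map f v)"
    using assms(2) by (simp add: strict_sorted_iff)
  then obtain i where i: "Suc i < length v" and "\<not> f (v ! i) < f (v ! Suc i)"
    by (auto simp: sorted_wrt_iff_nth_Suc_transp)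
  moreover have "f (v ! i) \<le> f (v ! Suc i)"
    using assms(1) i by (auto simp: sorted_iff_nth_mono)
  moreover have "v = take i v @ v ! i # v ! Suc i # drop (Suc (Suc i)) v"
    using i by (simp add: Cons_nth_drop_Suc)
  ultimately show ?thesis
    using that by (meson order_neq_le_trans)
qed

lemma word_prod_normal_form:
  fixes w :: "'a::ring_1 letter list"
  assumes \<gamma>_mult: "\<And>x y. \<gamma> (x * y) = \<gamma> x * \<gamma> y"
    and "\<forall>c\<in>set w. homogeneous_letter \<gamma> c"
  shows "\<exists>(s::'u::ring_1) v. (s = 1 \<or> s = -1) \<and> distinct (map pos v) \<and>
    (\<forall>c\<in>set v. homogeneous_letter \<gamma> c) \<and>
    (\<forall>f. graded_commute \<gamma> f \<longrightarrow> (\<forall>k x y. f k (x * y) = f k x * f k y) \<longrightarrow>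
       word_prod f w = s * word_prod f v)"
  using assms(2)
proof (induction "length w" arbitrary: w rule: less_induct)
  case less
  obtain s :: 'u where s: "graded_sign w s"
    and sort: "\<forall>f. graded_commute \<gamma> f \<longrightarrow> word_prod f w = s * word_prod f (sort_key pos w)"
    using word_prod_sort[OF less.prems] by blast
  have s_unit: "s = 1 \<or> s = -1"
    using s by (auto simp: graded_sign_def)
  have hom_sorted: "\<forall>c\<in>set (sort_key pos w). homogeneous_letter \<gamma> c"
    using less.prems by simp
  show ?case
  proof (cases "distinct (map pos (sort_key pos w))")
    case True
    have "\<forall>f. graded_commute \<gamma> f \<longrightarrow> (\<forall>k x y. f k (x * y) = f k x * f k y) \<longrightarrow>
      word_prod f w = s * word_prod f (sort_key pos w)"
      using sort by blast
    with s_unit True hom_sorted show ?thesis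
      by (intro exI[of _ s] exI[of _ "sort_key pos w"] conjI)
  next
    case False
    then obtain u a b r where u: "sort_key pos w = u @ a # b # r" and ab: "pos a = pos b"
      using sorted_not_distinct_adjacent[OF sorted_sort_key] by blast
    define w' where "w' = u @ merge_letters a b # r"
    have shorter: "length w' < length w"
      using arg_cong[OF u, of length] by (simp add: w'_def)
    have hom': "\<forall>c\<in>set w'. homogeneous_letter \<gamma> c"
    proof -
      have "homogeneous_letter \<gamma> (merge_letters a b)"
        by (rule homogeneous_merge_letters[of \<gamma>, OF \<gamma>_mult]) (use hom_sorted in \<open>simp_all add: u\<close>)
      then show ?thesis
        using hom_sorted by (simp add: u w'_def)
    qed
    obtain t :: 'u and v where t: "t = 1 \<or> t = -1" and v: "distinct (map pos v)"
        "\<forall>c\<in>set v. homogeneous_letter \<gamma> c"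
      and w': "\<forall>f. graded_commute \<gamma> f \<longrightarrow> (\<forall>k x y. f k (x * y) = f k x * f k y) \<longrightarrow>
          word_prod f w' = t * word_prod f v"
      using less.hyps[OF shorter hom'] by blast
    have "\<forall>f. graded_commute \<gamma> f \<longrightarrow> (\<forall>k x y. f k (x * y) = f k x * f k y) \<longrightarrow>
      word_prod f w = s * t * word_prod f v"
    proof (intro allI impI)
      fix f :: "nat \<Rightarrow> 'a \<Rightarrow> 'u"
      assume f_comm: "graded_commute \<gamma> f" and f_mult: "\<forall>k x y. f k (x * y) = f k x * f k y"
      have "word_prod f w = s * word_prod f (u @ a # b # r)"
        using sort f_comm u by simp
      also have "\<dots> = s * word_prod f w'"
        using word_prod_merge_letters[of f a b u r] f_mult ab by (simp add: w'_def)
      also have "\<dots> = s * t * word_prod f v"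
        using w' f_comm f_mult by (simp add: mult.assoc)
      finally show "word_prod f w = s * t * word_prod f v" .
    qed
    moreover have "s * t = 1 \<or> s * t = -1"
      using s_unit t by auto
    ultimately show ?thesis
      using v by (intro exI[of _ "s * t"] exI[of _ v] conjI)
  qed
qed

fun word_factors :: "'a::one letter list \<Rightarrow> nat \<Rightarrow> 'a" where
  "word_factors [] = (\<lambda>_. 1)"
| "word_factors (c # v) = (word_factors v)(pos c := elt c)"

lemma word_factors_outside: "k \<notin> pos ` set v \<Longrightarrow> word_factors v k = 1"
  by (induction v) auto

lemma upt_split_at: "m \<le> j \<Longrightarrow> j < n \<Longrightarrow> [m..<n] = [m..<j] @ j # [Suc j..<n]"
  by (metis le_add_diff_inverse upt_add_eq_append upt_conv_Cons less_imp_le_nat)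

lemma prod_list_neutral: "(\<And>x. x \<in> set xs \<Longrightarrow> f x = 1) \<Longrightarrow> (\<Prod>x\<leftarrow>xs. f x) = (1::'a::monoid_mult)"
  by (induction xs) auto

lemma word_prod_strictly_sorted:
  fixes f :: "nat \<Rightarrow> 'a::one \<Rightarrow> 'u::monoid_mult"
  assumes one: "\<And>k. f k 1 = 1" and "sorted_wrt (<) (map pos v)"
    and "\<forall>c\<in>set v. m \<le> pos c \<and> pos c < N"
  shows "word_prod f v = (\<Prod>k\<leftarrow>[m..<N]. f k (word_factors v k))"
  using assms(2,3)
proof (induction v arbitrary: m)
  case Nil
  show ?case by (simp add: one prod_list_neutral)
next
  case (Cons c v)
  have above: "\<forall>d\<in>set v. pos c < pos d"
    using Cons.prems(1) by simp
  have split: "[m..<N] = [m..<pos c] @ pos c # [Suc (pos c)..<N]"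
    using Cons.prems(2) by (simp add: upt_split_at)
  have "(\<Prod>k\<leftarrow>[m..<pos c]. f k (word_factors (c # v) k)) = 1"
  proof (rule prod_list_neutral)
    fix k
    assume "k \<in> set [m..<pos c]"
    then have "k \<notin> pos ` set (c # v)"
      using above by force
    then show "f k (word_factors (c # v) k) = 1"
      by (simp only: word_factors_outside[OF \<open>k \<notin> pos ` set (c # v)\<close>] one)
  qed
  moreover have "(\<Prod>k\<leftarrow>[Suc (pos c)..<N]. f k (word_factors (c # v) k)) =
      (\<Prod>k\<leftarrow>[Suc (pos c)..<N]. f k (word_factors v k))"
    by (rule arg_cong[where f = prod_list], rule map_cong) auto
  moreover have "\<dots> = word_prod f v"
    using Cons.IH[of "Suc (pos c)"] Cons.prems above by (simp add: Suc_le_eq)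
  ultimately show ?case
    by (simp add: split)
qed

lemma multiadditive_eqI:
  fixes F G :: "(nat \<Rightarrow> 'a::plus) \<Rightarrow> 'b::plus"
  assumes split: "\<And>x. \<exists>y z. x = y + z \<and> H y \<and> H z"
    and F_add: "\<And>Y m x y. m < n \<Longrightarrow> F (Y(m := x + y)) = F (Y(m := x)) + F (Y(m := y))"
    and G_add: "\<And>Y m x y. m < n \<Longrightarrow> G (Y(m := x + y)) = G (Y(m := x)) + G (Y(m := y))"
    and eq: "\<And>Y. (\<And>j. j < n \<Longrightarrow> H (Y j)) \<Longrightarrow> F Y = G Y"
  shows "F X = G X"
proof -
  have reduce: "F Y = G Y" if "\<And>j. k \<le> j \<Longrightarrow> j < n \<Longrightarrow> H (Y j)" for k Y
    using that
  proof (induction k arbitrary: Y)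
    case 0
    then show ?case by (simp add: eq)
  next
    case (Suc k)
    show ?case
    proof (cases "k < n")
      case True
      obtain y z where yz: "Y k = y + z" "H y" "H z"
        using split by blast
      have hom_above: "\<And>j. k < j \<Longrightarrow> j < n \<Longrightarrow> H (Y j)"
        using Suc.prems by (simp add: Suc_le_eq)
      have "F (Y(k := y)) = G (Y(k := y))" and "F (Y(k := z)) = G (Y(k := z))"
        using hom_above yz by (auto intro!: Suc.IH simp: le_less)
      then have "F (Y(k := y + z)) = G (Y(k := y + z))"
        by (simp only: F_add[OF True] G_add[OF True])
      moreover have "Y(k := y + z) = Y"
        by (simp add: yz(1)[symmetric])
      ultimately show ?thesis
        by simp
    next
      case False
      then show ?thesis
        using Suc by (auto intro!: Suc.IH simp: Suc_le_eq)
    qed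
  qed
  show ?thesis
    by (rule reduce[of n]) simp
qed

lemma prod_list_update_add:
  fixes \<kappa> :: "nat \<Rightarrow> 'a::plus \<Rightarrow> 'u::semiring_1"
  assumes "\<And>j x y. \<kappa> j (x + y) = \<kappa> j x + \<kappa> j y" and "m < n"
  shows "(\<Prod>j\<leftarrow>[0..<n]. \<kappa> j ((Y(m := x + y)) j)) =
    (\<Prod>j\<leftarrow>[0..<n]. \<kappa> j ((Y(m := x)) j)) + (\<Prod>j\<leftarrow>[0..<n]. \<kappa> j ((Y(m := y)) j))"
proof -
  have below: "(\<Prod>j\<leftarrow>[0..<m]. \<kappa> j ((Y(m := z)) j)) = (\<Prod>j\<leftarrow>[0..<m]. \<kappa> j (Y j))"
    and above: "(\<Prod>j\<leftarrow>[Suc m..<n]. \<kappa> j ((Y(m := z)) j)) = (\<Prod>j\<leftarrow>[Suc m..<n]. \<kappa> j (Y j))"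
    for z by (rule arg_cong[where f = prod_list], rule map_cong, simp, simp)+
  have factor: "(\<Prod>j\<leftarrow>[0..<n]. \<kappa> j ((Y(m := z)) j)) =
      (\<Prod>j\<leftarrow>[0..<m]. \<kappa> j (Y j)) * (\<kappa> m z * (\<Prod>j\<leftarrow>[Suc m..<n]. \<kappa> j (Y j)))" for z
    using assms(2) by (simp add: upt_split_at[of 0 m n] below above fun_upd_same del: fun_upd_apply)
  show ?thesis
    unfolding factor assms(1) by (simp only: distrib_left distrib_right)
qed

locale graded_tensor_model =
  fixes sa :: "complex \<Rightarrow> 'a::ring_1 \<Rightarrow> 'a" and \<gamma> :: "'a \<Rightarrow> 'a" and \<phi> :: "'a \<Rightarrow> complex"
    and su :: "complex \<Rightarrow> 'u::ring_1 \<Rightarrow> 'u" and \<gamma>u :: "'u \<Rightarrow> 'u" and \<psi> :: "'u \<Rightarrow> complex"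
    and \<iota> :: "nat \<Rightarrow> 'a \<Rightarrow> 'u"
  assumes ncps: "graded_ncps sa \<gamma> \<phi>"
    and tensor: "inf_graded_tensor_product sa \<gamma> \<phi> su \<gamma>u \<psi> \<iota>"
begin

lemma \<gamma>_hom: "module_hom sa sa \<gamma>"
  using ncps by (simp add: graded_ncps_def grading_def alg_hom_def module_hom_iff_linear)

lemma \<gamma>_mult: "\<gamma> (x * y) = \<gamma> x * \<gamma> y"
  using ncps by (simp add: graded_ncps_def grading_def alg_hom_def)

lemma \<gamma>_involution: "\<gamma> (\<gamma> x) = x"
  using ncps by (simp add: graded_ncps_def grading_def)

lemma even_odd_decomp:
  obtains y z where "x = y + z" and "even_elt \<gamma> y" and "odd_elt \<gamma> z"
proof
  have sa: "module sa"
    using ncps by (simp add: graded_ncps_def cplx_algebra_def)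
  define y where "y = sa (1/2) (x + \<gamma> x)"
  show "x = y + (x - y)"
    by simp
  show "even_elt \<gamma> y"
    by (simp add: even_elt_def y_def module_hom.scale[OF \<gamma>_hom] module_hom.add[OF \<gamma>_hom]
        \<gamma>_involution add.commute)
  have "y + y = sa (1/2 + 1/2) (x + \<gamma> x)"
    by (simp only: y_def module.scale_left_distrib[OF sa])
  then have "y + y = x + \<gamma> x"
    by (simp add: module.scale_one[OF sa])
  then show "odd_elt \<gamma> (x - y)"
    by (simp add: odd_elt_def module_hom.diff[OF \<gamma>_hom] \<open>even_elt \<gamma> y\<close>[unfolded even_elt_def]
        algebra_simps)
qed

lemma \<phi>_one: "\<phi> 1 = 1"
  using ncps by (simp add: graded_ncps_def)

lemma \<phi>_odd:
  assumes "odd_elt \<gamma> x"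
  shows "\<phi> x = 0"
proof -
  have \<phi>_hom: "module_hom sa (*) \<phi>"
    using ncps by (simp add: graded_ncps_def module_hom_iff_linear)
  have "\<phi> x = \<phi> (\<gamma> x)"
    using ncps by (simp add: graded_ncps_def)
  also have "\<dots> = - \<phi> x"
    using assms by (simp add: odd_elt_def module_hom.neg[OF \<phi>_hom])
  finally show ?thesis
    by simp
qed

lemma \<iota>_alg_hom: "alg_hom sa su (\<iota> k)"
  using tensor unfolding inf_graded_tensor_product_def by blast

lemma \<iota>_hom: "module_hom sa su (\<iota> k)"
  using \<iota>_alg_hom by (simp add: alg_hom_def module_hom_iff_linear)

lemma \<iota>_one: "\<iota> k 1 = 1"
  using \<iota>_alg_hom by (simp add: alg_hom_def)

lemma \<iota>_mult: "\<iota> k (x * y) = \<iota> k x * \<iota> k y"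
  using \<iota>_alg_hom by (simp add: alg_hom_def)

lemma \<iota>_graded_commute: "graded_commute \<gamma> \<iota>"
  using tensor unfolding inf_graded_tensor_product_def graded_commute_def by blast

lemma \<psi>_hom: "module_hom su (*) \<psi>"
proof -
  have "Vector_Spaces.linear su (*) \<psi>"
    using tensor unfolding inf_graded_tensor_product_def by blast
  then show ?thesis
    by (simp add: module_hom_iff_linear)
qed

lemma \<psi>_ordered_prod: "\<psi> (ordered_prod \<iota> N x) = (\<Prod>k<N. \<phi> (x k))"
  using tensor unfolding inf_graded_tensor_product_def by blast

lemma \<psi>_word_prod_distinct:
  assumes "distinct (map pos v)" and "\<forall>c\<in>set v. homogeneous_letter \<gamma> c"
  shows "\<psi> (word_prod \<iota> v) = (\<Prod>c\<leftarrow>v. \<phi> (elt c))"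
proof -
  obtain s :: 'u where s: "graded_sign v s"
    and sorted: "\<forall>f. graded_commute \<gamma> f \<longrightarrow> word_prod f v = s * word_prod f (sort_key pos v)"
    using word_prod_sort[OF assms(2)] by blast
  define u where "u = sort_key pos v"
  have perm: "mset u = mset v"
    by (simp add: u_def)
  then have "distinct (map pos u)"
    using assms(1) by (metis mset_map mset_eq_imp_distinct_iff)
  then have strict: "sorted_wrt (<) (map pos u)"
    by (simp add: strict_sorted_iff u_def)
  define N where "N = Suc (Max (pos ` set u))"
  have bound: "\<forall>c\<in>set u. 0 \<le> pos c \<and> pos c < N"
    by (auto simp: N_def intro!: le_imp_less_Suc Max_ge)
  have "\<psi> (word_prod \<iota> u) = \<psi> (ordered_prod \<iota> N (word_factors u))"
    using word_prod_strictly_sorted[of \<iota> u 0 N] \<iota>_one strict bound by (simp add: ordered_prod_def)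
  also have "\<dots> = (\<Prod>k<N. \<phi> (word_factors u k))"
    by (rule \<psi>_ordered_prod)
  also have "\<dots> = (\<Prod>k\<leftarrow>[0..<N]. \<phi> (word_factors u k))"
    by (metis atLeast_upt distinct_upt prod.distinct_set_conv_list)
  also have "\<dots> = word_prod (\<lambda>_. \<phi>) u"
    using word_prod_strictly_sorted[of "\<lambda>_. \<phi>" u 0 N] \<phi>_one strict bound by simp
  also have "\<dots> = (\<Prod>c\<leftarrow>v. \<phi> (elt c))"
  proof -
    have "mset (map (\<lambda>c. \<phi> (elt c)) u) = mset (map (\<lambda>c. \<phi> (elt c)) v)"
      using perm by simp
    then show ?thesis
      unfolding word_prod_def by (metis prod_mset_prod_list)
  qed
  finally have sorted_value: "\<psi> (word_prod \<iota> u) = (\<Prod>c\<leftarrow>v. \<phi> (elt c))" .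
  have v_u: "word_prod \<iota> v = s * word_prod \<iota> u"
    using sorted \<iota>_graded_commute by (simp add: u_def)
  from s consider "s = 1" | "s = -1" and "\<exists>c\<in>set v. odd_deg c"
    by (auto simp: graded_sign_def)
  then show ?thesis
  proof cases
    case 1
    then show ?thesis
      using v_u sorted_value by simp
  next
    case 2
    then obtain c where "c \<in> set v" and "odd_deg c"
      by blast
    then have "\<phi> (elt c) = 0"
      using assms(2) \<phi>_odd by (auto simp: homogeneous_letter_def)
    then have "(\<Prod>c\<leftarrow>v. \<phi> (elt c)) = 0"
      using \<open>c \<in> set v\<close> by (auto simp: prod_list_zero_iff)
    then show ?thesis
      using v_u sorted_value 2 by (simp add: module_hom.neg[OF \<psi>_hom])
  qed
qed

lemma \<psi>_word_prod_relabel: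
  assumes "inj \<sigma>" and "\<forall>c\<in>set w. homogeneous_letter \<gamma> c"
  shows "\<psi> (word_prod \<iota> w) = \<psi> (word_prod (\<lambda>k. \<iota> (\<sigma> k)) w)"
proof -
  obtain s :: 'u and v where s: "s = 1 \<or> s = -1"
    and v: "distinct (map pos v)" "\<forall>c\<in>set v. homogeneous_letter \<gamma> c"
    and normal: "\<forall>f. graded_commute \<gamma> f \<longrightarrow> (\<forall>k x y. f k (x * y) = f k x * f k y) \<longrightarrow>
      word_prod f w = s * word_prod f v"
    using word_prod_normal_form[OF \<gamma>_mult assms(2)] by blast
  define v' where "v' = map (\<lambda>c. Letter (\<sigma> (pos c)) (elt c) (odd_deg c)) v"
  have "map pos v' = map \<sigma> (map pos v)"
    by (simp add: v'_def)
  moreover have "distinct (map \<sigma> (map pos v))"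
    using v(1) by (simp only: distinct_map) (meson assms(1) inj_on_subset subset_UNIV)
  ultimately have "distinct (map pos v')"
    by simp
  moreover have "\<forall>c\<in>set v'. homogeneous_letter \<gamma> c"
    using v(2) by (auto simp: v'_def homogeneous_letter_def)
  ultimately have "\<psi> (word_prod \<iota> v') = \<psi> (word_prod \<iota> v)"
    using v by (simp add: \<psi>_word_prod_distinct v'_def o_def)
  moreover have "word_prod (\<lambda>k. \<iota> (\<sigma> k)) v = word_prod \<iota> v'"
    by (simp add: v'_def word_prod_def o_def)
  moreover have "word_prod \<iota> w = s * word_prod \<iota> v"
    using normal[rule_format, OF \<iota>_graded_commute] \<iota>_mult by simp
  moreover have "word_prod (\<lambda>k. \<iota> (\<sigma> k)) w = s * word_prod (\<lambda>k. \<iota> (\<sigma> k)) v"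
    using normal[rule_format, OF graded_commute_relabel[OF \<iota>_graded_commute assms(1)]] \<iota>_mult by simp
  ultimately show ?thesis
    using s by (auto simp: module_hom.neg[OF \<psi>_hom])
qed

lemma \<psi>_prod_relabel_homogeneous:
  assumes "inj \<sigma>" and "\<And>j. j < n \<Longrightarrow> even_elt \<gamma> (X j) \<or> odd_elt \<gamma> (X j)"
  shows "\<psi> (\<Prod>j\<leftarrow>[0..<n]. \<iota> (i j) (X j)) = \<psi> (\<Prod>j\<leftarrow>[0..<n]. \<iota> (\<sigma> (i j)) (X j))"
proof -
  define w where "w = map (\<lambda>j. Letter (i j) (X j) (\<not> even_elt \<gamma> (X j))) [0..<n]"
  have "\<forall>c\<in>set w. homogeneous_letter \<gamma> c"
    by (auto simp: w_def homogeneous_letter_def dest: assms(2))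
  then have "\<psi> (word_prod \<iota> w) = \<psi> (word_prod (\<lambda>k. \<iota> (\<sigma> k)) w)"
    by (rule \<psi>_word_prod_relabel[OF assms(1)])
  then show ?thesis
    by (simp add: w_def word_prod_def o_def)
qed

lemma \<psi>_prod_update_add:
  assumes "m < n"
  shows "\<psi> (\<Prod>j\<leftarrow>[0..<n]. \<iota> (p j) ((Y(m := x + y)) j)) =
    \<psi> (\<Prod>j\<leftarrow>[0..<n]. \<iota> (p j) ((Y(m := x)) j)) + \<psi> (\<Prod>j\<leftarrow>[0..<n]. \<iota> (p j) ((Y(m := y)) j))"
  using prod_list_update_add[of "\<lambda>j. \<iota> (p j)", OF module_hom.add[OF \<iota>_hom] assms]
  by (simp add: module_hom.add[OF \<psi>_hom])

end

theorem proposition4p21: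
  fixes sa :: "complex \<Rightarrow> 'a::ring_1 \<Rightarrow> 'a" and \<gamma> :: "'a \<Rightarrow> 'a" and \<phi> :: "'a \<Rightarrow> complex"
    and su :: "complex \<Rightarrow> 'u::ring_1 \<Rightarrow> 'u" and \<gamma>u :: "'u \<Rightarrow> 'u" and \<psi> :: "'u \<Rightarrow> complex"
    and \<iota> :: "nat \<Rightarrow> 'a \<Rightarrow> 'u"
    and X :: "nat \<Rightarrow> 'a" and i :: "nat \<Rightarrow> nat" and n :: nat and \<sigma> :: "nat \<Rightarrow> nat"
  assumes "graded_ncps sa \<gamma> \<phi>"
    and "inf_graded_tensor_product sa \<gamma> \<phi> su \<gamma>u \<psi> \<iota>"
    and "bij \<sigma>"
  shows "\<psi> (prod_list (map (\<lambda>j. \<iota> (i j) (X j)) [0..<n]))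
       = \<psi> (prod_list (map (\<lambda>j. \<iota> (\<sigma> (i j)) (X j)) [0..<n]))"
proof -
  interpret graded_tensor_model sa \<gamma> \<phi> su \<gamma>u \<psi> \<iota>
    using assms(1,2) by unfold_locales
  have "inj \<sigma>"
    using assms(3) by (rule bij_is_inj)
  show ?thesis
  proof (rule multiadditive_eqI[where H = "\<lambda>x. even_elt \<gamma> x \<or> odd_elt \<gamma> x"
        and F = "\<lambda>Y. \<psi> (\<Prod>j\<leftarrow>[0..<n]. \<iota> (i j) (Y j))"
        and G = "\<lambda>Y. \<psi> (\<Prod>j\<leftarrow>[0..<n]. \<iota> (\<sigma> (i j)) (Y j))"])
    show "\<exists>y z. x = y + z \<and> (even_elt \<gamma> y \<or> odd_elt \<gamma> y) \<and> (even_elt \<gamma> z \<or> odd_elt \<gamma> z)" for x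
      by (metis even_odd_decomp)
  qed (rule \<psi>_prod_update_add \<psi>_prod_relabel_homogeneous[OF \<open>inj \<sigma>\<close>]; assumption)+
qed

end
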